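(* Let $p\in\mathbb{N}$, let $f\in A_p$, and let $g\in R_f(G)$. Then $g$ has finite even order $2s$ for some $s\in\mathbb{N}$ such that $p/s$ is an odd integer.
   Context: $G$ denotes the group (under composition) of biholomorphic germs at $0$ in one complex variable: germs of functions $f$ holomorphic near $0$ with $f(0)=0$ and $f'(0)\neq 0$. The multiplier of $f$ is $m(f)=f'(0)$. $G_1=\{f\in G: f'(0)=1\}$, and for $p\in\mathbb{N}$, $G_p=\{f\in G_1: f^{(k)}(0)=0 \text{ for } 2\le k\le p\}$ and $A_p=G_p\setminus G_{p+1}$ (so $f\in A_p$ means $f(z)=z+f_{p+1}z^{p+1}+O(z^{p+2})$ with $f_{p+1}\ne 0$). For $f\in G$, $R_f(G)$ is the set of $g\in G$ with $g^{-1}\circ f\circ g=f^{-1}$. *)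

theory Defs
  imports "HOL-Complex_Analysis.Complex_Analysis"
begin

text \<open>Germs at 0 are represented by functions; two functions define the same germ
  iff they agree on a neighbourhood of 0.\<close>
definition germ_eq :: "(complex \<Rightarrow> complex) \<Rightarrow> (complex \<Rightarrow> complex) \<Rightarrow> bool" where
  "germ_eq f g \<longleftrightarrow> (\<forall>\<^sub>F z in nhds 0. f z = g z)"

definition in_G :: "(complex \<Rightarrow> complex) \<Rightarrow> bool" where
  "in_G f \<longleftrightarrow> (\<exists>r>0. f holomorphic_on ball 0 r) \<and> f 0 = 0 \<and> deriv f 0 \<noteq> 0"

definition in_Gp :: "nat \<Rightarrow> (complex \<Rightarrow> complex) \<Rightarrow> bool" where
  "in_Gp p f \<longleftrightarrow> in_G f \<and> deriv f 0 = 1 \<and> (\<forall>k. 2 \<le> k \<and> k \<le> p \<longrightarrow> (deriv ^^ k) f 0 = 0)"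

definition in_Ap :: "nat \<Rightarrow> (complex \<Rightarrow> complex) \<Rightarrow> bool" where
  "in_Ap p f \<longleftrightarrow> in_Gp p f \<and> \<not> in_Gp (Suc p) f"

definition germ_inv :: "(complex \<Rightarrow> complex) \<Rightarrow> (complex \<Rightarrow> complex) \<Rightarrow> bool" where
  "germ_inv f h \<longleftrightarrow> in_G h \<and> germ_eq (h \<circ> f) id \<and> germ_eq (f \<circ> h) id"

definition in_R :: "(complex \<Rightarrow> complex) \<Rightarrow> (complex \<Rightarrow> complex) \<Rightarrow> bool" where
  "in_R f g \<longleftrightarrow> in_G g \<and> (\<exists>ginv finv. germ_inv g ginv \<and> germ_inv f finv \<and>
      germ_eq (ginv \<circ> f \<circ> g) finv)"

definition germ_order :: "(complex \<Rightarrow> complex) \<Rightarrow> nat \<Rightarrow> bool" where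
  "germ_order g n \<longleftrightarrow> 1 \<le> n \<and> germ_eq (g ^^ n) id \<and>
      (\<forall>m. 1 \<le> m \<and> m < n \<longrightarrow> \<not> germ_eq (g ^^ m) id)"

end

theory Submission
  imports Defs
begin

(* Write f(z) = z + a z^(p+1) + ... with a ~= 0, and let l = g'(0). Comparing leading
   coefficients in f o g = g o f^-1 gives l^(p+1) a = -l a, so l^p = -1; hence l has even
   order 2s with p/s odd. As g^2 commutes with f, so does h = g^(2s), which is tangent to the
   identity. If h ~= id, say h(z) = z + b z^(q+1) + ... with b ~= 0, then commuting with g
   forces l^q = 1 and commuting with f forces q = p, contradicting l^p = -1. So g^(2s) = id,
   and no smaller positive power of g is the identity since its multiplier l^m is not 1. *)

section \<open>The group of germs\<close>

lemma isCont_holomorphic_on_ball: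
  assumes "f holomorphic_on ball 0 r" "norm x < r"
  shows "isCont f x"
  using assms by (metis centre_in_ball continuous_on_interior holomorphic_on_imp_continuous_on
      interior_ball mem_ball_0 continuous_at_imp_continuous_on)

lemma in_G_isCont: "in_G f \<Longrightarrow> isCont f 0"
  unfolding in_G_def using isCont_holomorphic_on_ball by fastforce

lemma in_G_field_differentiable: "in_G f \<Longrightarrow> f field_differentiable at 0"
  unfolding in_G_def
  by (metis centre_in_ball holomorphic_on_imp_differentiable_at open_ball)

lemma in_G_comp:
  assumes f: "in_G f" and g: "in_G g"
  shows "in_G (f \<circ> g)" and "deriv (f \<circ> g) 0 = deriv f 0 * deriv g 0"
proof -
  obtain rf rg where rf: "rf > 0" "f holomorphic_on ball 0 rf"
    and rg: "rg > 0" "g holomorphic_on ball 0 rg"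
    using f g by (auto simp: in_G_def)
  have g0: "g 0 = 0" using g by (simp add: in_G_def)
  obtain d where d: "d > 0" "\<And>x. dist x 0 < d \<Longrightarrow> dist (g x) 0 < rf"
    using in_G_isCont[OF g] rf(1) g0 unfolding continuous_at_eps_delta by metis
  define r where "r = min rg d"
  have "(f \<circ> g) holomorphic_on ball 0 r"
  proof (rule holomorphic_on_compose_gen[OF _ rf(2)])
    show "g holomorphic_on ball 0 r" using rg(2) by (rule holomorphic_on_subset) (auto simp: r_def)
    show "g ` ball 0 r \<subseteq> ball 0 rf" using d(2) by (auto simp: r_def dist_commute)
  qed
  moreover show "deriv (f \<circ> g) 0 = deriv f 0 * deriv g 0"
    using deriv_chain[OF in_G_field_differentiable[OF g]] in_G_field_differentiable[OF f] g0 by simp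
  moreover have "r > 0" using rg(1) d(1) by (simp add: r_def)
  ultimately show "in_G (f \<circ> g)"
    using f g g0 by (auto simp: in_G_def)
qed

lemma in_G_id: "in_G id"
  unfolding in_G_def by (auto intro!: exI[of _ 1])

lemma in_G_funpow:
  assumes "in_G g"
  shows "in_G (g ^^ n)" and "deriv (g ^^ n) 0 = deriv g 0 ^ n"
proof (induction n)
  case 0
  { case 1 show ?case using in_G_id by (simp add: id_def) }
  { case 2 show ?case by (simp add: id_def) }
next
  case (Suc n)
  { case 1 show ?case using in_G_comp(1)[OF assms Suc(1)] by (simp only: funpow.simps(2)) }
  { case 2 show ?case
      using in_G_comp(2)[OF assms Suc(1)] Suc(2) by (simp only: funpow.simps(2) power_Suc) }
qed

lemma in_G_tendsto_zero: "in_G g \<Longrightarrow> (g \<longlongrightarrow> 0) (at 0)"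
  using in_G_isCont[of g] by (simp add: isCont_def in_G_def)

lemma in_G_tendsto_ratio:
  assumes "in_G g"
  shows "((\<lambda>z. g z / z) \<longlongrightarrow> deriv g 0) (at 0)"
proof -
  have "(g has_field_derivative deriv g 0) (at 0)"
    using in_G_field_differentiable[OF assms] by (simp add: DERIV_deriv_iff_field_differentiable)
  then show ?thesis
    using assms by (simp add: has_field_derivative_iff in_G_def)
qed

lemma deriv_germ_eq_id: "germ_eq h id \<Longrightarrow> deriv h 0 = 1"
  unfolding germ_eq_def using deriv_cong_ev[of h id 0 0] by simp

section \<open>Germ identities for a reversor\<close>

lemma germ_eq_sym: "germ_eq a b \<Longrightarrow> germ_eq b a"
  unfolding germ_eq_def by (auto elim: eventually_mono)

lemma germ_eq_trans [trans]: "germ_eq a b \<Longrightarrow> germ_eq b c \<Longrightarrow> germ_eq a c"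
  unfolding germ_eq_def by (auto elim: eventually_elim2)

lemma germ_eq_comp_left: "germ_eq a b \<Longrightarrow> germ_eq (c \<circ> a) (c \<circ> b)"
  unfolding germ_eq_def by (auto elim: eventually_mono)

lemma germ_eq_comp_right:
  assumes "germ_eq a b" and "in_G c"
  shows "germ_eq (a \<circ> c) (b \<circ> c)"
proof -
  have "filterlim c (nhds 0) (nhds 0)"
    using in_G_isCont[OF assms(2)] assms(2)
    by (simp add: in_G_def isCont_def tendsto_at_iff_tendsto_nhds)
  with assms(1) show ?thesis
    unfolding germ_eq_def by (auto dest: eventually_compose_filterlim)
qed

lemma germ_eq_eventually_at: "germ_eq a b \<Longrightarrow> \<forall>\<^sub>F z in at 0. a z = b z"
  unfolding germ_eq_def eventually_at_filter by (erule eventually_mono) simp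

lemma germ_commute_funpow:
  assumes "germ_eq (f \<circ> k) (k \<circ> f)" and "in_G k"
  shows "germ_eq (f \<circ> k ^^ n) (k ^^ n \<circ> f)"
proof (induction n)
  case 0
  show ?case by (simp add: germ_eq_def)
next
  case (Suc n)
  have "germ_eq (f \<circ> k ^^ Suc n) (k \<circ> f \<circ> k ^^ n)"
    using germ_eq_comp_right[OF assms(1) in_G_funpow(1)[OF assms(2)]] by (simp add: o_assoc)
  also have "germ_eq (k \<circ> f \<circ> k ^^ n) (k ^^ Suc n \<circ> f)"
    using germ_eq_comp_left[OF Suc, of k] by (simp only: o_assoc funpow.simps(2))
  finally show ?case .
qed

lemma reversor_conjugates:
  assumes "in_G f" and "in_R f g"
  obtains finv where "germ_inv f finv"
    and "germ_eq (f \<circ> g) (g \<circ> finv)" and "germ_eq (g \<circ> f) (finv \<circ> g)"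
proof -
  obtain ginv finv where g: "in_G g" and ginv: "germ_inv g ginv" and finv: "germ_inv f finv"
    and rev: "germ_eq (ginv \<circ> f \<circ> g) finv"
    using assms(2) by (auto simp: in_R_def)
  note f = assms(1)
  have "germ_eq (g \<circ> ginv \<circ> (f \<circ> g)) (f \<circ> g)"
    using germ_eq_comp_right[OF _ in_G_comp(1)[OF f g], of "g \<circ> ginv" id] ginv
    by (simp add: germ_inv_def)
  then have "germ_eq (f \<circ> g) (g \<circ> ginv \<circ> (f \<circ> g))"
    by (rule germ_eq_sym)
  also have "germ_eq (g \<circ> ginv \<circ> (f \<circ> g)) (g \<circ> finv)"
    using germ_eq_comp_left[OF rev, of g] by (simp add: o_assoc)
  finally have fg: "germ_eq (f \<circ> g) (g \<circ> finv)" .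
  have "germ_eq (finv \<circ> f \<circ> (g \<circ> f)) (g \<circ> f)"
    using germ_eq_comp_right[OF _ in_G_comp(1)[OF g f], of "finv \<circ> f" id] finv
    by (simp add: germ_inv_def)
  then have "germ_eq (g \<circ> f) (finv \<circ> f \<circ> g \<circ> f)"
    by (subst (asm) o_assoc) (rule germ_eq_sym)
  also have "germ_eq (finv \<circ> f \<circ> g \<circ> f) (finv \<circ> g \<circ> (finv \<circ> f))"
    using germ_eq_comp_left[OF germ_eq_comp_right[OF fg f], of finv] by (simp add: o_assoc)
  also have "germ_eq (finv \<circ> g \<circ> (finv \<circ> f)) (finv \<circ> g)"
    using germ_eq_comp_left[of "finv \<circ> f" id "finv \<circ> g"] finv by (simp add: germ_inv_def)
  finally show ?thesis by (rule that[OF finv fg])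
qed

lemma reversor_commutes_even_iterates:
  assumes "in_G f" and "in_R f g"
  shows "germ_eq (f \<circ> g ^^ (2 * n)) (g ^^ (2 * n) \<circ> f)"
proof -
  obtain finv where "germ_inv f finv"
    and fg: "germ_eq (f \<circ> g) (g \<circ> finv)" and gf: "germ_eq (g \<circ> f) (finv \<circ> g)"
    using reversor_conjugates[OF assms] .
  have g: "in_G g" using assms(2) by (simp add: in_R_def)
  have "germ_eq (f \<circ> (g \<circ> g)) (g \<circ> finv \<circ> g)"
    using germ_eq_comp_right[OF fg g] by (simp add: o_assoc)
  also have "germ_eq (g \<circ> finv \<circ> g) ((g \<circ> g) \<circ> f)"
    using germ_eq_comp_left[OF germ_eq_sym[OF gf], of g] by (simp add: o_assoc)
  finally have "germ_eq (f \<circ> (g \<circ> g) ^^ n) ((g \<circ> g) ^^ n \<circ> f)"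
    using germ_commute_funpow in_G_comp(1)[OF g g] by blast
  moreover have "(g \<circ> g) ^^ n = g ^^ (2 * n)"
    using funpow_mult[where f = g and m = 2 and n = n] by (simp add: numeral_2_eq_2)
  ultimately show ?thesis by simp
qed

section \<open>Difference quotients at the origin\<close>

lemma holomorphic_strictly_differentiable:
  fixes g :: "complex \<Rightarrow> complex"
  assumes hol: "g holomorphic_on ball 0 r" and r: "r > 0" and e: "\<epsilon> > 0"
  obtains \<delta> where "\<delta> > 0" and "\<And>x y. x \<in> ball 0 \<delta> \<Longrightarrow> y \<in> ball 0 \<delta> \<Longrightarrow>
           norm (g x - g y - deriv g 0 * (x - y)) \<le> \<epsilon> * norm (x - y)"
proof -
  have "isCont (deriv g) 0"
    using isCont_holomorphic_on_ball[OF holomorphic_deriv[OF hol open_ball]] r by simp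
  then obtain d where d: "d > 0" "\<And>w. dist w 0 < d \<Longrightarrow> dist (deriv g w) (deriv g 0) < \<epsilon>"
    using e unfolding continuous_at_eps_delta by blast
  define \<delta> where "\<delta> = min d r"
  have "norm (g x - g y - deriv g 0 * (x - y)) \<le> \<epsilon> * norm (x - y)"
    if "x \<in> ball 0 \<delta>" and "y \<in> ball 0 \<delta>" for x y
  proof -
    have "norm ((\<lambda>w. g w - deriv g 0 * w) x - (\<lambda>w. g w - deriv g 0 * w) y) \<le> \<epsilon> * norm (x - y)"
    proof (rule field_differentiable_bound[where f' = "\<lambda>w. deriv g w - deriv g 0"])
      show "((\<lambda>w. g w - deriv g 0 * w) has_field_derivative deriv g z - deriv g 0)
              (at z within ball 0 \<delta>)" if "z \<in> ball 0 \<delta>" for z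
      proof -
        have "z \<in> ball 0 r" using that by (simp add: \<delta>_def)
        then have "(g has_field_derivative deriv g z) (at z within ball 0 \<delta>)"
          using hol by (simp add: holomorphic_derivI)
        then show ?thesis by (auto intro!: derivative_eq_intros)
      qed
      show "norm (deriv g z - deriv g 0) \<le> \<epsilon>" if "z \<in> ball 0 \<delta>" for z
        using d(2)[of z] that by (auto simp: \<delta>_def dist_norm)
    qed (use that in auto)
    then show ?thesis by (simp add: algebra_simps)
  qed
  moreover have "\<delta> > 0" using d(1) r by (simp add: \<delta>_def)
  ultimately show ?thesis using that by blast
qed

lemma tendsto_image_difference_quotient:
  fixes g u v w :: "complex \<Rightarrow> complex"
  assumes hol: "g holomorphic_on ball 0 r" and r: "r > 0"
    and u: "(u \<longlongrightarrow> 0) (at 0)" and v: "(v \<longlongrightarrow> 0) (at 0)"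
    and c: "((\<lambda>z. (u z - v z) / w z) \<longlongrightarrow> c) (at 0)"
  shows "((\<lambda>z. (g (u z) - g (v z)) / w z) \<longlongrightarrow> deriv g 0 * c) (at 0)"
proof -
  define E where "E z = g (u z) - g (v z) - deriv g 0 * (u z - v z)" for z
  have E0: "((\<lambda>z. E z / w z) \<longlongrightarrow> 0) (at 0)"
  proof (rule tendstoI)
    fix e :: real assume e: "e > 0"
    define \<epsilon> where "\<epsilon> = e / (2 * (norm c + 1))"
    have \<epsilon>: "\<epsilon> > 0"
      unfolding \<epsilon>_def using e norm_ge_zero[of c] by (intro divide_pos_pos mult_pos_pos) linarith+
    obtain \<delta> where "\<delta> > 0" and bound: "\<And>x y. x \<in> ball 0 \<delta> \<Longrightarrow> y \<in> ball 0 \<delta> \<Longrightarrow>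
           norm (g x - g y - deriv g 0 * (x - y)) \<le> \<epsilon> * norm (x - y)"
      using holomorphic_strictly_differentiable[OF hol r \<epsilon>] by blast
    have "\<forall>\<^sub>F z in at 0. dist (u z) 0 < \<delta>" "\<forall>\<^sub>F z in at 0. dist (v z) 0 < \<delta>"
      using u v \<open>\<delta> > 0\<close> by (auto dest: tendstoD)
    moreover have "\<forall>\<^sub>F z in at 0. dist ((u z - v z) / w z) c < 1"
      using c by (rule tendstoD) simp
    ultimately show "\<forall>\<^sub>F z in at 0. dist (E z / w z) 0 < e"
    proof eventually_elim
      case (elim z)
      have "norm ((u z - v z) / w z) < norm c + 1"
        using elim(3) norm_triangle_ineq2[of "(u z - v z) / w z" c] by (simp add: dist_norm)
      moreover have "norm (E z) \<le> \<epsilon> * norm (u z - v z)"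
        unfolding E_def using bound elim(1,2) by (simp add: dist_norm)
      then have "norm (E z / w z) \<le> \<epsilon> * norm ((u z - v z) / w z)"
        by (simp add: norm_divide divide_right_mono)
      ultimately have "norm (E z / w z) \<le> \<epsilon> * (norm c + 1)"
        using \<epsilon> by (smt (verit) mult_left_mono)
      also have "\<dots> < e" using e by (simp add: \<epsilon>_def field_simps add_pos_nonneg)
      finally show ?case by simp
    qed
  qed
  have "((\<lambda>z. deriv g 0 * ((u z - v z) / w z) + E z / w z) \<longlongrightarrow> deriv g 0 * c + 0) (at 0)"
    by (intro tendsto_intros c E0)
  moreover have "deriv g 0 * ((u z - v z) / w z) + E z / w z = (g (u z) - g (v z)) / w z" for z
    by (simp add: E_def field_simps diff_divide_distrib add_divide_distrib)
  ultimately show ?thesis by simp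
qed

lemma tendsto_zero_eventually_in_ball:
  "(u \<longlongrightarrow> (0::complex)) F \<Longrightarrow> r > 0 \<Longrightarrow> eventually (\<lambda>z. u z \<in> ball 0 r) F"
  by (drule tendstoD[of u 0 F r]) (auto simp: dist_norm elim!: eventually_mono)

section \<open>Germs tangent to the identity\<close>

(* f(w) = w + F(0) w^(q+1) + O(w^(q+2)) with F(0) ~= 0: f lies in A_q, with leading coefficient F(0). *)
definition tangent_to_id :: "nat \<Rightarrow> (complex \<Rightarrow> complex) \<Rightarrow> (complex \<Rightarrow> complex) \<Rightarrow> bool" where
  "tangent_to_id q F f \<longleftrightarrow>
     (\<exists>r>0. F holomorphic_on ball 0 r \<and> (\<forall>w\<in>ball 0 r. f w = w + w ^ Suc q * F w)) \<and> F 0 \<noteq> 0"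

lemma tangent_to_id_isCont: "tangent_to_id q F f \<Longrightarrow> isCont F 0"
  unfolding tangent_to_id_def using isCont_holomorphic_on_ball by fastforce

lemma tangent_to_id_eventually:
  assumes "tangent_to_id q F f" and "(u \<longlongrightarrow> 0) G"
  shows "\<forall>\<^sub>F z in G. f (u z) = u z + u z ^ Suc q * F (u z)"
  using assms tendsto_zero_eventually_in_ball unfolding tangent_to_id_def
  by (fastforce elim: eventually_mono)

lemma tangent_to_id_displacement:
  assumes "tangent_to_id q F f"
  shows "((\<lambda>z. (f z - z) / z ^ Suc q) \<longlongrightarrow> F 0) (at 0)"
proof -
  have "\<forall>\<^sub>F z in at 0. f z = z + z ^ Suc q * F z"
    using tangent_to_id_eventually[OF assms tendsto_ident_at] .
  moreover have "\<forall>\<^sub>F z in at (0::complex). z \<noteq> 0"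
    by (rule eventually_neq_at_within)
  ultimately have "\<forall>\<^sub>F z in at 0. F z = (f z - z) / z ^ Suc q"
    by eventually_elim simp
  then show ?thesis
    using tangent_to_id_isCont[OF assms] by (simp add: isCont_def Lim_transform_eventually)
qed

lemma tangent_to_id_of_higher_deriv:
  assumes hol: "h holomorphic_on ball 0 r" and r: "r > 0" and h0: "h 0 = 0"
    and h1: "deriv h 0 = 1" and q: "1 \<le> q" and hq: "(deriv ^^ Suc q) h 0 \<noteq> 0"
    and hk: "\<And>k. 2 \<le> k \<Longrightarrow> k \<le> q \<Longrightarrow> (deriv ^^ k) h 0 = 0"
  shows "\<exists>F. tangent_to_id q F h"
proof -
  define \<phi> where "\<phi> w = h w - w" for w
  have hol\<phi>: "\<phi> holomorphic_on ball 0 r" unfolding \<phi>_def using hol by (intro holomorphic_intros)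
  have d\<phi>: "(deriv ^^ i) \<phi> 0 = (deriv ^^ i) h 0 - (deriv ^^ i) (\<lambda>w. w) 0" for i
    unfolding \<phi>_def by (rule higher_deriv_diff) (use hol r in auto)
  obtain F r' where "0 < r'" "F holomorphic_on ball 0 r'"
      and F: "\<And>w. w \<in> ball 0 r' \<Longrightarrow> \<phi> w - \<phi> 0 = (w - 0) ^ Suc q * F w"
      and F0: "\<And>w. w \<in> ball 0 r' \<Longrightarrow> F w \<noteq> 0"
  proof (rule holomorphic_factor_order_of_zero[OF hol\<phi> open_ball, of 0 "Suc q"])
    show "(deriv ^^ Suc q) \<phi> 0 \<noteq> 0" using hq q d\<phi>[of "Suc q"] by (simp del: funpow.simps)
    show "(deriv ^^ i) \<phi> 0 = 0" if "0 < i" "i < Suc q" for i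
      using that h1 hk[of i] d\<phi>[of i] by (cases "i = 1") auto
  qed (use r in auto)
  moreover have "\<forall>w\<in>ball 0 r'. h w = w + w ^ Suc q * F w"
    using F h0 by (auto simp: \<phi>_def algebra_simps)
  ultimately show ?thesis
    unfolding tangent_to_id_def by (intro exI[of _ F]) auto
qed

lemma in_Ap_tangent_to_id:
  assumes "1 \<le> p" and "in_Ap p f"
  shows "\<exists>F. tangent_to_id p F f"
proof -
  have f: "in_G f" "deriv f 0 = 1" and dk: "\<And>k. 2 \<le> k \<Longrightarrow> k \<le> p \<Longrightarrow> (deriv ^^ k) f 0 = 0"
    using assms(2) by (auto simp: in_Ap_def in_Gp_def)
  have "(deriv ^^ Suc p) f 0 \<noteq> 0"
    using assms(2) f dk by (auto simp: in_Ap_def in_Gp_def le_Suc_eq)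
  then show ?thesis
    using tangent_to_id_of_higher_deriv[OF _ _ _ f(2) assms(1) _ dk] f(1) by (auto simp: in_G_def)
qed

lemma in_G_tangent_to_id:
  assumes h: "in_G h" and h1: "deriv h 0 = 1" and nid: "\<not> germ_eq h id"
  shows "\<exists>q F. 1 \<le> q \<and> tangent_to_id q F h"
proof -
  obtain r where hol: "h holomorphic_on ball 0 r" and r: "r > 0" and h0: "h 0 = 0"
    using h by (auto simp: in_G_def)
  have "\<exists>k. 2 \<le> k \<and> (deriv ^^ k) h 0 \<noteq> 0"
  proof (rule ccontr)
    assume all0: "\<not> ?thesis"
    have "(deriv ^^ k) (\<lambda>w. h w - w) 0 = 0" for k
    proof -
      have "(deriv ^^ k) (\<lambda>w. h w - w) 0 = (deriv ^^ k) h 0 - (deriv ^^ k) (\<lambda>w. w) 0"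
        by (rule higher_deriv_diff) (use hol r in auto)
      then show ?thesis
        by (cases "k = 0"; cases "k = 1") (use h0 h1 all0 in auto)
    qed
    then have "h w - w = 0" if "w \<in> ball 0 r" for w
      using holomorphic_fun_eq_0_on_ball[of "\<lambda>w. h w - w" 0 r w] that
      by (simp add: hol holomorphic_on_diff)
    then have "germ_eq h id"
      unfolding germ_eq_def using eventually_nhds_in_open[of "ball 0 r" 0] r
      by (auto elim!: eventually_mono)
    with nid show False ..
  qed
  define m where "m = (LEAST k. 2 \<le> k \<and> (deriv ^^ k) h 0 \<noteq> 0)"
  have m: "2 \<le> m" "(deriv ^^ m) h 0 \<noteq> 0"
    using LeastI_ex[OF \<open>\<exists>k. _\<close>] by (auto simp: m_def)
  have "(deriv ^^ k) h 0 = 0" if "2 \<le> k" "k \<le> m - 1" for k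
    using not_less_Least[of k "\<lambda>k. 2 \<le> k \<and> (deriv ^^ k) h 0 \<noteq> 0"] that m(1)
    by (auto simp: m_def)
  moreover have "Suc (m - 1) = m" "1 \<le> m - 1" using m(1) by auto
  ultimately show ?thesis
    using tangent_to_id_of_higher_deriv[OF hol r h0 h1, of "m - 1"] m(2) by auto
qed

lemma tangent_to_id_inverse_displacement:
  assumes f: "tangent_to_id p F f" and p: "1 \<le> p"
    and finv: "germ_eq (f \<circ> finv) id" and finv0: "(finv \<longlongrightarrow> 0) (at 0)"
  shows "((\<lambda>z. (finv z - z) / z ^ Suc p) \<longlongrightarrow> - F 0) (at 0)"
proof -
  have F: "((\<lambda>z. F (finv z)) \<longlongrightarrow> F 0) (at 0)"
    using isCont_tendsto_compose[OF tangent_to_id_isCont[OF f] finv0] .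
  have "((\<lambda>z. - F (finv z) / (1 + finv z ^ p * F (finv z)) ^ Suc p)
          \<longlongrightarrow> - F 0 / (1 + 0 ^ p * F 0) ^ Suc p) (at 0)"
    by (intro tendsto_intros F finv0) (use p in \<open>simp add: power_0_left\<close>)
  moreover have "\<forall>\<^sub>F z in at 0. - F (finv z) / (1 + finv z ^ p * F (finv z)) ^ Suc p
                                 = (finv z - z) / z ^ Suc p"
    using germ_eq_eventually_at[OF finv] tangent_to_id_eventually[OF f finv0]
      eventually_neq_at_within[of 0 0 UNIV]
  proof eventually_elim
    case (elim z)
    define w where "w = finv z"
    define e where "e = 1 + w ^ p * F w"
    have z: "z = w * e"
      using elim(1,2) by (simp add: w_def e_def algebra_simps)
    then have "w \<noteq> 0" using elim(3) by auto
    have "w - z = - (w ^ Suc p * F w)" by (simp add: z e_def algebra_simps)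
    moreover have "z ^ Suc p = w ^ Suc p * e ^ Suc p" by (simp only: z power_mult_distrib)
    ultimately have "(w - z) / z ^ Suc p = - (w ^ Suc p * F w) / (w ^ Suc p * e ^ Suc p)"
      by (simp only:)
    also have "\<dots> = - F w / e ^ Suc p"
      using \<open>w \<noteq> 0\<close> by simp
    finally show ?case by (simp add: w_def e_def)
  qed
  ultimately show ?thesis using p by (simp add: Lim_transform_eventually power_0_left)
qed

lemma conjugate_displacement:
  assumes g: "in_G g" and k: "tangent_to_id n K k"
    and conj: "germ_eq (g \<circ> u) (k \<circ> g)" and u0: "(u \<longlongrightarrow> 0) (at 0)"
    and c: "((\<lambda>z. (u z - z) / z ^ Suc n) \<longlongrightarrow> c) (at 0)"
  shows "deriv g 0 * c = deriv g 0 ^ Suc n * K 0"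
proof -
  obtain r where hol: "g holomorphic_on ball 0 r" and r: "r > 0"
    using g by (auto simp: in_G_def)
  have "((\<lambda>z. (g (u z) - g z) / z ^ Suc n) \<longlongrightarrow> deriv g 0 * c) (at 0)"
    using tendsto_image_difference_quotient[OF hol r u0 tendsto_ident_at c] .
  moreover have "((\<lambda>z. (g (u z) - g z) / z ^ Suc n) \<longlongrightarrow> deriv g 0 ^ Suc n * K 0) (at 0)"
  proof (rule Lim_transform_eventually)
    show "((\<lambda>z. (g z / z) ^ Suc n * K (g z)) \<longlongrightarrow> deriv g 0 ^ Suc n * K 0) (at 0)"
      by (intro tendsto_intros in_G_tendsto_ratio[OF g]
          isCont_tendsto_compose[OF tangent_to_id_isCont[OF k] in_G_tendsto_zero[OF g]])
    show "\<forall>\<^sub>F z in at 0. (g z / z) ^ Suc n * K (g z) = (g (u z) - g z) / z ^ Suc n"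
      using germ_eq_eventually_at[OF conj] tangent_to_id_eventually[OF k in_G_tendsto_zero[OF g]]
      by eventually_elim (simp add: power_divide)
  qed
  ultimately show ?thesis by (rule LIM_unique)
qed

lemma commuting_tangent_multiplier:
  assumes g: "in_G g" and h: "in_G h" and hq: "tangent_to_id q H h"
    and comm: "germ_eq (g \<circ> h) (h \<circ> g)"
  shows "deriv g 0 ^ q = 1"
proof -
  have "deriv g 0 * H 0 = deriv g 0 ^ Suc q * H 0"
    using conjugate_displacement[OF g hq comm in_G_tendsto_zero[OF h]
        tangent_to_id_displacement[OF hq]] .
  moreover have "deriv g 0 \<noteq> 0" "H 0 \<noteq> 0"
    using g hq by (auto simp: in_G_def tangent_to_id_def)
  ultimately show ?thesis by simp
qed

(* phi(w) = w^(p+1) F(w) has phi'(z) ~ (p+1) F(0) z^p, and k moves z by ~ K(0) z^(q+1). *)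
lemma power_remainder_increment_limit:
  fixes F K k :: "complex \<Rightarrow> complex"
  assumes F: "F holomorphic_on ball 0 r" "r > 0" and k: "tangent_to_id q K k" and q: "1 \<le> q"
  shows "((\<lambda>z. (k z ^ Suc p * F (k z) - z ^ Suc p * F z) / z ^ (p + q + 1))
           \<longlongrightarrow> of_nat (Suc p) * F 0 * K 0) (at 0)"
proof -
  define X where "X z = z ^ q * K z" for z
  define S where "S x = (\<Sum>i<Suc p. (1 + x) ^ i)" for x :: complex
  have K: "(K \<longlongrightarrow> K 0) (at 0)" using tangent_to_id_isCont[OF k] by (simp add: isCont_def)
  have X: "(X \<longlongrightarrow> 0) (at 0)"
  proof -
    have "(X \<longlongrightarrow> 0 ^ q * K 0) (at 0)" unfolding X_def by (intro tendsto_intros K)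
    then show ?thesis using q by (simp add: power_0_left)
  qed
  have S: "((\<lambda>z. S (X z)) \<longlongrightarrow> of_nat (Suc p)) (at 0)"
  proof -
    have "((\<lambda>z. S (X z)) \<longlongrightarrow> (\<Sum>i<Suc p. (1 + 0) ^ i)) (at 0)"
      unfolding S_def by (intro tendsto_intros X)
    then show ?thesis by simp
  qed
  have k_eq: "\<forall>\<^sub>F z in at 0. k z = z + z ^ Suc q * K z"
    using tangent_to_id_eventually[OF k tendsto_ident_at] .
  have k0: "(k \<longlongrightarrow> 0) (at 0)"
  proof -
    have "((\<lambda>z. z + z ^ Suc q * K z) \<longlongrightarrow> 0 + 0 ^ Suc q * K 0) (at 0)"
      by (intro tendsto_intros K)
    then show ?thesis using k_eq by (simp add: tendsto_cong)
  qed
  have "((\<lambda>z. (k z - z) / z ^ q) \<longlongrightarrow> 0 * K 0) (at 0)"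
  proof (rule Lim_transform_eventually)
    show "((\<lambda>z. z * K z) \<longlongrightarrow> 0 * K 0) (at 0)" by (intro tendsto_intros K)
    show "\<forall>\<^sub>F z in at 0. z * K z = (k z - z) / z ^ q"
      using k_eq eventually_neq_at_within[of 0 0 UNIV] by eventually_elim simp
  qed
  then have dF: "((\<lambda>z. (F (k z) - F z) / z ^ q) \<longlongrightarrow> deriv F 0 * 0) (at 0)"
    using tendsto_image_difference_quotient[OF F k0 tendsto_ident_at, of "\<lambda>z. z ^ q" 0] by simp
  have F0: "(F \<longlongrightarrow> F 0) (at 0)"
    using isCont_holomorphic_on_ball[OF F(1)] F(2) by (simp add: isCont_def)
  show ?thesis
  proof (rule Lim_transform_eventually)
    have "((\<lambda>z. (1 + X z) ^ Suc p * ((F (k z) - F z) / z ^ q) + F z * K z * S (X z))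
            \<longlongrightarrow> (1 + 0) ^ Suc p * (deriv F 0 * 0) + F 0 * K 0 * of_nat (Suc p)) (at 0)"
      by (intro tendsto_intros X dF F0 K S)
    then show "((\<lambda>z. (1 + X z) ^ Suc p * ((F (k z) - F z) / z ^ q) + F z * K z * S (X z))
            \<longlongrightarrow> of_nat (Suc p) * F 0 * K 0) (at 0)"
      by (simp add: mult_ac)
    show "\<forall>\<^sub>F z in at 0. (1 + X z) ^ Suc p * ((F (k z) - F z) / z ^ q) + F z * K z * S (X z)
            = (k z ^ Suc p * F (k z) - z ^ Suc p * F z) / z ^ (p + q + 1)"
      using k_eq eventually_neq_at_within[of 0 0 UNIV]
    proof eventually_elim
      case (elim z)
      have kz: "k z = z * (1 + X z)" using elim(1) by (simp add: X_def algebra_simps)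
      have geom: "(1 + X z) ^ Suc p - 1 = X z * S (X z)"
        using power_diff_1_eq[of "1 + X z" "Suc p"] by (simp add: S_def)
      have "(k z ^ Suc p * F (k z) - z ^ Suc p * F z) / z ^ (p + q + 1)
          = (z ^ Suc p * ((1 + X z) ^ Suc p * F (k z) - F z)) / (z ^ Suc p * z ^ q)"
      proof -
        have "k z ^ Suc p = z ^ Suc p * (1 + X z) ^ Suc p" by (simp only: kz power_mult_distrib)
        moreover have "z ^ (p + q + 1) = z ^ Suc p * z ^ q" by (simp add: power_add)
        ultimately show ?thesis by (simp add: algebra_simps)
      qed
      also have "\<dots> = ((1 + X z) ^ Suc p * F (k z) - F z) / z ^ q"
        using elim(2) by simp
      also have "\<dots> = (1 + X z) ^ Suc p * ((F (k z) - F z) / z ^ q)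
                       + F z * (((1 + X z) ^ Suc p - 1) / z ^ q)"
        using elim(2) by (simp add: field_simps)
      also have "((1 + X z) ^ Suc p - 1) / z ^ q = K z * S (X z)"
        unfolding geom using elim(2) by (simp add: X_def)
      finally show ?case by (simp add: mult_ac)
    qed
  qed
qed

(* Subtracting z from h(f z) = f(h z) equates the increment of w^(q+1) H(w) along f with that
   of w^(p+1) F(w) along h; their leading terms are (q+1) H(0) F(0) z^(p+q+1) and
   (p+1) F(0) H(0) z^(p+q+1). *)
lemma commuting_tangent_orders_eq:
  assumes f: "tangent_to_id p F f" and p: "1 \<le> p" and h: "tangent_to_id q H h" and q: "1 \<le> q"
    and f0: "(f \<longlongrightarrow> 0) (at 0)" and h0: "(h \<longlongrightarrow> 0) (at 0)"
    and comm: "germ_eq (h \<circ> f) (f \<circ> h)"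
  shows "p = q"
proof -
  obtain rF rH where F: "F holomorphic_on ball 0 rF" "rF > 0"
    and H: "H holomorphic_on ball 0 rH" "rH > 0"
    using f h by (auto simp: tangent_to_id_def)
  have "\<forall>\<^sub>F z in at 0. (f z ^ Suc q * H (f z) - z ^ Suc q * H z) / z ^ (q + p + 1)
      = (h z ^ Suc p * F (h z) - z ^ Suc p * F z) / z ^ (p + q + 1)"
    using germ_eq_eventually_at[OF comm]
      tangent_to_id_eventually[OF f tendsto_ident_at] tangent_to_id_eventually[OF h tendsto_ident_at]
      tangent_to_id_eventually[OF h f0] tangent_to_id_eventually[OF f h0]
    by eventually_elim (simp add: algebra_simps)
  then have "((\<lambda>z. (h z ^ Suc p * F (h z) - z ^ Suc p * F z) / z ^ (p + q + 1))
               \<longlongrightarrow> of_nat (Suc q) * H 0 * F 0) (at 0)"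
    using power_remainder_increment_limit[OF H f p] by (rule Lim_transform_eventually[rotated])
  then have "of_nat (Suc q) * H 0 * F 0 = (of_nat (Suc p) * F 0 * H 0 :: complex)"
    using power_remainder_increment_limit[OF F h q] by (rule LIM_unique)
  then show ?thesis
    using f h by (simp add: tangent_to_id_def)
qed

section \<open>Multiplier and order of a reversor\<close>

lemma reversor_multiplier:
  assumes p: "1 \<le> p" and f: "in_Ap p f" and g: "in_R f g"
  shows "deriv g 0 ^ p = -1"
proof -
  obtain F where F: "tangent_to_id p F f" using in_Ap_tangent_to_id[OF p f] by blast
  have fG: "in_G f" and gG: "in_G g" using f g by (auto simp: in_Ap_def in_Gp_def in_R_def)
  obtain finv where finv: "germ_inv f finv" and fg: "germ_eq (f \<circ> g) (g \<circ> finv)"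
    using reversor_conjugates[OF fG g] by blast
  have finv0: "(finv \<longlongrightarrow> 0) (at 0)"
    using finv in_G_tendsto_zero by (auto simp: germ_inv_def)
  have "deriv g 0 * - F 0 = deriv g 0 ^ Suc p * F 0"
    using conjugate_displacement[OF gG F germ_eq_sym[OF fg] finv0
        tangent_to_id_inverse_displacement[OF F p _ finv0]] finv
    by (simp add: germ_inv_def)
  moreover have "deriv g 0 * F 0 * (deriv g 0 ^ p + 1)
      = deriv g 0 ^ Suc p * F 0 - deriv g 0 * - F 0"
    by (simp add: algebra_simps)
  ultimately have "deriv g 0 * F 0 * (deriv g 0 ^ p + 1) = 0"
    by simp
  moreover have "deriv g 0 \<noteq> 0" "F 0 \<noteq> 0"
    using gG F by (auto simp: in_G_def tangent_to_id_def)
  ultimately show ?thesis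
    by (simp add: add_eq_0_iff2)
qed

lemma power_eq_neg_one_order:
  fixes l :: "'a::ring_char_0"
  assumes p: "1 \<le> p" and lp: "l ^ p = -1"
  obtains s k where "1 \<le> s" and "l ^ (2 * s) = 1"
    and "\<And>m. 0 < m \<Longrightarrow> m < 2 * s \<Longrightarrow> l ^ m \<noteq> 1" and "odd k" and "p = k * s"
proof -
  have "l ^ (2 * p) = (l ^ p) ^ 2" by (simp add: power_mult[symmetric] mult.commute)
  then have l2p: "l ^ (2 * p) = 1" using lp by simp
  define d where "d = (LEAST n. 0 < n \<and> l ^ n = 1)"
  have "\<exists>n. 0 < n \<and> l ^ n = 1" using l2p p by (intro exI[of _ "2 * p"]) auto
  then have "0 < d \<and> l ^ d = 1" unfolding d_def by (rule LeastI_ex)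
  then have d: "0 < d" "l ^ d = 1" by auto
  have dmin: "l ^ m \<noteq> 1" if "0 < m" "m < d" for m
    using not_less_Least[of m "\<lambda>n. 0 < n \<and> l ^ n = 1"] that by (auto simp: d_def)
  have dvd: "d dvd n" if "l ^ n = 1" for n
  proof -
    have "l ^ n = l ^ (d * (n div d) + n mod d)" by simp
    also have "\<dots> = (l ^ d) ^ (n div d) * l ^ (n mod d)" by (simp only: power_add power_mult)
    also have "\<dots> = l ^ (n mod d)" using d by simp
    finally have "l ^ (n mod d) = 1" using that by simp
    then show ?thesis using dmin[of "n mod d"] d(1) by (auto simp: mod_eq_0_iff_dvd[symmetric])
  qed
  have ndp: "\<not> d dvd p"
    using lp by (auto simp: power_mult d(2) neg_one_neq_one[symmetric])
  have "d dvd 2 * p" using dvd l2p .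
  have "even d"
    using \<open>d dvd 2 * p\<close> ndp coprime_dvd_mult_right_iff[of d 2 p] by (auto simp: coprime_commute)
  then obtain s where s: "d = 2 * s" ..
  moreover have "s dvd p" using \<open>d dvd 2 * p\<close> s by simp
  ultimately obtain k where k: "p = k * s"
    by (metis dvdE mult.commute)
  have "odd k"
    using ndp k s by (auto simp: mult.assoc)
  then show ?thesis
    using that[of s k] d s k dmin by simp
qed

lemma commuting_iterate_eq_id:
  assumes p: "1 \<le> p" and f: "in_Ap p f" and g: "in_G g"
    and lp: "deriv g 0 ^ p = -1" and ln: "deriv g 0 ^ n = 1"
    and comm: "germ_eq (f \<circ> g ^^ n) (g ^^ n \<circ> f)"
  shows "germ_eq (g ^^ n) id"
proof (rule ccontr)
  assume nid: "\<not> germ_eq (g ^^ n) id"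
  have h: "in_G (g ^^ n)" and h1: "deriv (g ^^ n) 0 = 1"
    using in_G_funpow[OF g] ln by auto
  obtain q H where q: "1 \<le> q" and H: "tangent_to_id q H (g ^^ n)"
    using in_G_tangent_to_id[OF h h1 nid] by blast
  have "germ_eq (g \<circ> g ^^ n) (g ^^ n \<circ> g)"
    by (simp add: germ_eq_def funpow_swap1)
  then have "deriv g 0 ^ q = 1"
    using commuting_tangent_multiplier[OF g h H] by blast
  obtain F where F: "tangent_to_id p F f" using in_Ap_tangent_to_id[OF p f] by blast
  have "in_G f" using f by (simp add: in_Ap_def in_Gp_def)
  then have "p = q"
    using commuting_tangent_orders_eq[OF F p H q in_G_tendsto_zero in_G_tendsto_zero[OF h]
        germ_eq_sym[OF comm]] by blast
  with lp \<open>deriv g 0 ^ q = 1\<close> show False by simp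
qed

theorem theorem1p4:
  fixes p :: nat and f g :: "complex \<Rightarrow> complex"
  assumes "1 \<le> p" and "in_Ap p f" and "in_R f g"
  shows "\<exists>s\<ge>1. germ_order g (2 * s) \<and> (\<exists>k::nat. odd k \<and> p = k * s)"
proof -
  have g: "in_G g" and f: "in_G f" using assms by (auto simp: in_R_def in_Ap_def in_Gp_def)
  have lp: "deriv g 0 ^ p = -1" using reversor_multiplier[OF assms] .
  obtain s k where s: "1 \<le> s" "deriv g 0 ^ (2 * s) = 1"
    and smin: "\<And>m. 0 < m \<Longrightarrow> m < 2 * s \<Longrightarrow> deriv g 0 ^ m \<noteq> 1"
    and k: "odd k" "p = k * s"
    using power_eq_neg_one_order[OF assms(1) lp] by blast
  have "germ_eq (g ^^ (2 * s)) id"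
    using commuting_iterate_eq_id[OF assms(1,2) g lp s(2)]
      reversor_commutes_even_iterates[OF f assms(3)] by blast
  moreover have "\<not> germ_eq (g ^^ m) id" if "1 \<le> m" "m < 2 * s" for m
    using deriv_germ_eq_id[of "g ^^ m"] in_G_funpow(2)[OF g, of m] smin[of m] that by auto
  ultimately have "germ_order g (2 * s)"
    using s(1) by (simp add: germ_order_def)
  with s(1) k show ?thesis by blast
qed

end
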